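(* Let $s_1,s_2,s_3\in\Sigma^n$ be such that $s_1,s_2$ are matching and $s_2,s_3$ are matching, and let $h = h_{s_1,s_2}\oplus h_{s_2,s_3}$ (position-wise XOR). (i) If $h$ contains no two consecutive $1$s, then $s_1$ and $s_3$ are matching and $h = h_{s_1,s_3}$. (ii) If $h[p-1]=h[p]=1$ for some $p$, then $s_1$ and $s_3$ are not matching, and every string $t\in\Sigma^n$ that matches both $s_1$ and $s_3$ satisfies $t[p-1..p+1] = s_2[p-1..p+1]$.
   Context: The swap at position $p$ transforms $s$ into $s[1]\cdots s[p-1]\,s[p+1]\,s[p]\,s[p+2]\cdots s[|s|]$. A swap permutation is a set of swaps at positions pairwise differing by at least $2$ (applied simultaneously). Two strings of length $n$ are matching if some swap permutation transforms one into the other. A swap permutation is valid if it never swaps two identical letters; for matching strings $u,v$ there is a unique valid swap permutation from $u$ to $v$, and $h_{u,v}$ denotes its swap string: the binary string of length $n-1$ with $h_{u,v}[p]=1$ iff this valid permutation swaps positions $(p,p+1)$. *)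

theory Defs
  imports Main
begin

text \<open>Strings of length n over an alphabet are lists of type 'a list. Positions are
0-indexed here (position p of the paper is index p-1). A swap at index p exchanges
indices p and p+1.\<close>

definition apply_swaps :: "nat set \<Rightarrow> 'a list \<Rightarrow> 'a list" where
  "apply_swaps P s = map (\<lambda>i. if i \<in> P then s ! (i+1)
                               else if 0 < i \<and> i - 1 \<in> P then s ! (i-1)
                               else s ! i) [0..<length s]"

definition swap_perm :: "nat \<Rightarrow> nat set \<Rightarrow> bool" where
  "swap_perm n P \<longleftrightarrow> (\<forall>p\<in>P. p + 1 < n) \<and>
     (\<forall>p\<in>P. \<forall>q\<in>P. p \<noteq> q \<longrightarrow> p + 2 \<le> q \<or> q + 2 \<le> p)"

definition matching :: "'a list \<Rightarrow> 'a list \<Rightarrow> bool" where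
  "matching u v \<longleftrightarrow> length u = length v \<and>
     (\<exists>P. swap_perm (length u) P \<and> apply_swaps P u = v)"

definition valid_swaps :: "nat set \<Rightarrow> 'a list \<Rightarrow> bool" where
  "valid_swaps P u \<longleftrightarrow> (\<forall>p\<in>P. u ! p \<noteq> u ! (p+1))"

definition valid_perm :: "'a list \<Rightarrow> 'a list \<Rightarrow> nat set" where
  "valid_perm u v = (THE P. swap_perm (length u) P \<and> valid_swaps P u \<and> apply_swaps P u = v)"

definition swap_string :: "'a list \<Rightarrow> 'a list \<Rightarrow> bool list" where
  "swap_string u v = map (\<lambda>p. p \<in> valid_perm u v) [0..<length u - 1]"

definition xor_list :: "bool list \<Rightarrow> bool list \<Rightarrow> bool list" where
  "xor_list a b = map2 (\<noteq>) a b"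

end

(* Let A and B be the valid swap sets taking s2 to s1 and to s3; then h is the indicator of
   their symmetric difference.  Applying A and then B is the same as applying A \<Delta> B whenever
   the latter is again a swap permutation, i.e. whenever h has no two adjacent 1s, and
   validity is inherited; this gives (i).
   For (ii) say A swaps (q, q+1) and B swaps (q+1, q+2), where s2 reads a b c with a \<noteq> b \<noteq> c.
   Comparing multisets of prefixes, a string t matching s1 and s3 must undo the swap at q
   coming from s1 (otherwise its prefix of length q+1 holds one b too many to be one swap
   permutation away from s3) and then the swap at q+1 coming from s3 (otherwise the prefixes
   of length q+2 of s1 and s3 would coincide).  So t agrees with s2 on q..q+2, and t = s1
   shows that s1 and s3 cannot match. *)

theory Submission
  imports Defs "HOL-Library.Multiset"
begin

definition swap_source :: "nat set \<Rightarrow> nat \<Rightarrow> nat" where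
  "swap_source P i = (if i \<in> P then Suc i else if 0 < i \<and> i - 1 \<in> P then i - 1 else i)"

lemma length_apply_swaps [simp]: "length (apply_swaps P s) = length s"
  by (simp add: apply_swaps_def)

lemma nth_apply_swaps: "i < length s \<Longrightarrow> apply_swaps P s ! i = s ! swap_source P i"
  by (simp add: apply_swaps_def swap_source_def)

lemma swap_perm_iff_no_adjacent:
  "swap_perm n P \<longleftrightarrow> (\<forall>p\<in>P. Suc p < n) \<and> (\<forall>p. \<not> (p \<in> P \<and> Suc p \<in> P))"
proof -
  have "p + 2 \<le> q \<or> q + 2 \<le> p \<longleftrightarrow> q \<noteq> p \<and> q \<noteq> Suc p \<and> p \<noteq> Suc q" for p q :: nat
    by linarith
  then show ?thesis
    unfolding swap_perm_def by (auto; metis n_not_Suc_n)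
qed

lemma swap_perm_Suc_less: "swap_perm n P \<Longrightarrow> p \<in> P \<Longrightarrow> Suc p < n"
  by (simp add: swap_perm_def)

lemma swap_perm_Suc_notin: "swap_perm n P \<Longrightarrow> p \<in> P \<Longrightarrow> Suc p \<notin> P"
  by (simp add: swap_perm_iff_no_adjacent)

lemma swap_perm_notin_Suc: "swap_perm n P \<Longrightarrow> Suc p \<in> P \<Longrightarrow> p \<notin> P"
  by (auto simp add: swap_perm_iff_no_adjacent)

lemma swap_source_less: "swap_perm n P \<Longrightarrow> i < n \<Longrightarrow> swap_source P i < n"
  by (auto simp: swap_source_def swap_perm_def)

lemma swap_source_swap_source: "swap_perm n P \<Longrightarrow> swap_source P (swap_source P i) = i"
  by (cases i) (auto simp: swap_source_def dest: swap_perm_Suc_notin swap_perm_notin_Suc)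

lemma apply_swaps_apply_swaps:
  assumes "swap_perm (length s) P"
  shows "apply_swaps P (apply_swaps P s) = s"
  by (rule nth_equalityI)
    (simp_all add: nth_apply_swaps swap_source_less[OF assms] swap_source_swap_source[OF assms])

lemma nth_apply_swaps_swapped:
  assumes "swap_perm (length s) P" "p \<in> P"
  shows "apply_swaps P s ! p = s ! Suc p" "apply_swaps P s ! Suc p = s ! p"
  using assms swap_perm_Suc_less[OF assms] swap_perm_Suc_notin[OF assms]
  by (simp_all add: nth_apply_swaps swap_source_def)

lemma matching_refl: "matching s s"
proof -
  have "apply_swaps {} s = s"
    by (rule nth_equalityI) (simp_all add: nth_apply_swaps swap_source_def)
  then show ?thesis
    unfolding matching_def swap_perm_def by blast
qed

lemma matching_sym: "matching u v \<Longrightarrow> matching v u"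
  unfolding matching_def by (metis apply_swaps_apply_swaps)

lemma matching_imp_valid:
  assumes "matching u v"
  shows "\<exists>P. swap_perm (length u) P \<and> valid_swaps P u \<and> apply_swaps P u = v"
proof -
  obtain P where P: "swap_perm (length u) P" "apply_swaps P u = v"
    using assms unfolding matching_def by blast
  define P' where "P' = {p\<in>P. u ! p \<noteq> u ! Suc p}"
  have "swap_perm (length u) P'"
    using P(1) unfolding swap_perm_def P'_def by auto
  moreover have "valid_swaps P' u"
    unfolding valid_swaps_def P'_def by auto
  moreover have "u ! swap_source P' i = u ! swap_source P i" for i
    unfolding swap_source_def P'_def using swap_perm_Suc_notin[OF P(1)]
    by (cases i) auto
  then have "apply_swaps P' u = v"
    using P(2) by (auto intro: nth_equalityI simp: nth_apply_swaps)
  ultimately show ?thesis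
    by blast
qed

(* At the least p where P and Q differ, the set containing p moves u ! Suc p to position p,
   the other leaves u ! p there, and validity makes these letters differ. *)
lemma valid_swaps_unique:
  assumes P: "swap_perm (length u) P" "valid_swaps P u"
    and Q: "swap_perm (length u) Q" "valid_swaps Q u"
    and eq: "apply_swaps P u = apply_swaps Q u"
  shows "P = Q"
proof (rule ccontr)
  assume "P \<noteq> Q"
  then obtain p where p: "(p \<in> P) \<noteq> (p \<in> Q)"
    and below: "\<And>j. j < p \<Longrightarrow> (j \<in> P) = (j \<in> Q)"
    using exists_least_iff[of "\<lambda>p. (p \<in> P) \<noteq> (p \<in> Q)"] by blast
  have "apply_swaps R u ! p = u ! Suc p" "apply_swaps S u ! p = u ! p" "u ! p \<noteq> u ! Suc p"
    if "swap_perm (length u) R" "valid_swaps R u" "p \<in> R" "p \<notin> S"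
      "\<And>j. j < p \<Longrightarrow> (j \<in> R) = (j \<in> S)" for R S
    using that swap_perm_Suc_less[OF that(1,3)] swap_perm_notin_Suc[OF that(1), of "p - 1"]
    by (auto simp: nth_apply_swaps swap_source_def valid_swaps_def)
  from this[OF P _ _ below] this[OF Q _ _ below[symmetric]] p eq show False
    by (cases "p \<in> P") auto
qed

lemma valid_perm_eqI:
  assumes "swap_perm (length u) P" "valid_swaps P u" "apply_swaps P u = v"
  shows "valid_perm u v = P"
  unfolding valid_perm_def
proof (rule the_equality)
  show "swap_perm (length u) P \<and> valid_swaps P u \<and> apply_swaps P u = v"
    using assms by blast
next
  fix Q assume "swap_perm (length u) Q \<and> valid_swaps Q u \<and> apply_swaps Q u = v"
  then show "Q = P"
    using valid_swaps_unique[of u Q P] assms by simp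
qed

lemma valid_perm_spec:
  assumes "matching u v"
  shows "swap_perm (length u) (valid_perm u v)" "valid_swaps (valid_perm u v) u"
    "apply_swaps (valid_perm u v) u = v"
proof -
  obtain P where "swap_perm (length u) P" "valid_swaps P u" "apply_swaps P u = v"
    using matching_imp_valid[OF assms] by blast
  moreover from this have "valid_perm u v = P"
    by (rule valid_perm_eqI)
  ultimately show "swap_perm (length u) (valid_perm u v)" "valid_swaps (valid_perm u v) u"
    "apply_swaps (valid_perm u v) u = v"
    by simp_all
qed

lemma valid_swaps_apply_swaps:
  assumes "swap_perm (length u) P" "valid_swaps P u"
  shows "valid_swaps P (apply_swaps P u)"
  unfolding valid_swaps_def
proof
  fix p assume "p \<in> P"
  then show "apply_swaps P u ! p \<noteq> apply_swaps P u ! (p + 1)"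
    using nth_apply_swaps_swapped[OF assms(1)] assms(2) by (auto simp: valid_swaps_def)
qed

lemma valid_perm_sym:
  assumes "matching u v"
  shows "valid_perm v u = valid_perm u v"
proof -
  define P where "P = valid_perm u v"
  have P: "swap_perm (length u) P" "valid_swaps P u" "apply_swaps P u = v"
    unfolding P_def using valid_perm_spec[OF assms] by simp_all
  then have "length v = length u" "apply_swaps P v = u"
    using apply_swaps_apply_swaps by auto
  then show ?thesis
    using P valid_swaps_apply_swaps[OF P(1,2)] valid_perm_eqI[of v P u] by (simp add: P_def)
qed

lemma nth_apply_valid_swaps_neq:
  assumes "swap_perm (length u) P" "valid_swaps P u" "p \<in> P"
  shows "apply_swaps P u ! p \<noteq> u ! p"
  using assms nth_apply_swaps_swapped[OF assms(1,3)] by (auto simp: valid_swaps_def)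

lemma swap_source_sym_diff:
  assumes "swap_perm n A" "swap_perm n B" "swap_perm n (sym_diff A B)"
  shows "swap_source A (swap_source B i) = swap_source (sym_diff A B) i"
proof -
  note adj = assms[unfolded swap_perm_iff_no_adjacent, THEN conjunct2, rule_format]
  consider "i = 0" | "i = 1" | k where "i = Suc (Suc k)"
    by (metis One_nat_def not0_implies_Suc)
  then show ?thesis
  proof cases
    case 1
    then show ?thesis
      using adj[of 0] by (cases "0 \<in> A"; cases "0 \<in> B") (simp_all add: swap_source_def)
  next
    case 2
    then show ?thesis
      using adj[of 0] adj[of 1]
      by (cases "0 \<in> A"; cases "0 \<in> B"; cases "1 \<in> A"; cases "1 \<in> B")
        (simp_all add: swap_source_def)
  next
    case 3
    then show ?thesis
      using adj[of k] adj[of "Suc k"] adj[of i]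
      by (cases "i \<in> A"; cases "i \<in> B"; cases "Suc k \<in> A"; cases "Suc k \<in> B")
        (simp_all add: swap_source_def)
  qed
qed

lemma apply_swaps_sym_diff:
  assumes "swap_perm (length u) A" "swap_perm (length u) B" "swap_perm (length u) (sym_diff A B)"
  shows "apply_swaps B (apply_swaps A u) = apply_swaps (sym_diff A B) u"
  by (rule nth_equalityI)
    (simp_all add: nth_apply_swaps swap_source_less[OF assms(2)] swap_source_sym_diff[OF assms])

lemma matching_trans_sym_diff:
  assumes uv: "matching v u" and vw: "matching v w"
    and no_adj: "\<And>p. p \<in> sym_diff (valid_perm v u) (valid_perm v w) \<Longrightarrow>
      Suc p \<notin> sym_diff (valid_perm v u) (valid_perm v w)"
  shows "matching u w" "valid_perm u w = sym_diff (valid_perm v u) (valid_perm v w)"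
proof -
  define A where "A = valid_perm v u"
  define B where "B = valid_perm v w"
  note A = valid_perm_spec[OF uv, folded A_def] and B = valid_perm_spec[OF vw, folded B_def]
  have len: "length u = length v"
    using A(3) length_apply_swaps by metis
  have A_u: "apply_swaps A u = v"
    using apply_swaps_apply_swaps[OF A(1)] A(3) by simp
  have adj: "\<not> (p \<in> sym_diff A B \<and> Suc p \<in> sym_diff A B)" for p
    using no_adj[folded A_def B_def] by blast
  have H_u: "swap_perm (length u) (sym_diff A B)"
    unfolding swap_perm_iff_no_adjacent len
    using adj swap_perm_Suc_less[OF A(1)] swap_perm_Suc_less[OF B(1)] by blast
  have w: "apply_swaps (sym_diff A B) u = w"
    using apply_swaps_sym_diff[OF _ _ H_u] A(1) B(1) B(3) len A_u by simp
  have valid: "valid_swaps (sym_diff A B) u"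
    unfolding valid_swaps_def
  proof
    fix p assume p: "p \<in> sym_diff A B"
    show "u ! p \<noteq> u ! (p + 1)"
    proof (cases "p \<in> A")
      case True
      then show ?thesis
        using valid_perm_spec[OF matching_sym[OF uv]] valid_perm_sym[OF uv]
        by (auto simp: A_def valid_swaps_def)
    next
      case False
      \<comment> \<open>A swap of A at p - 1 or p + 1 would put two adjacent indices into sym_diff A B.\<close>
      have "swap_source A p = p" "swap_source A (Suc p) = Suc p"
        using p False adj[of p] adj[of "p - 1"] swap_perm_Suc_notin[OF B(1)]
          swap_perm_notin_Suc[OF B(1), of "p - 1"]
        by (cases p; auto simp: swap_source_def)+
      moreover have "Suc p < length v"
        using False p swap_perm_Suc_less[OF B(1)] by auto
      ultimately have "u ! p = v ! p" "u ! Suc p = v ! Suc p"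
        using A(3) by (auto simp: nth_apply_swaps)
      then show ?thesis
        using B(2) False p by (auto simp: valid_swaps_def)
    qed
  qed
  show "matching u w"
    unfolding matching_def using H_u w by (auto simp flip: w)
  show "valid_perm u w = sym_diff A B"
    by (rule valid_perm_eqI[OF H_u valid w])
qed

lemma mset_take_Suc:
  "k < length w \<Longrightarrow> mset (take (Suc k) w) = add_mset (w ! k) (mset (take k w))"
  by (simp add: take_Suc_conv_app_nth)

lemma mset_take_Suc_apply_swaps:
  assumes P: "swap_perm (length u) P" and k: "k < length u"
  shows "mset (take (Suc k) (apply_swaps P u)) =
    (if k \<in> P then add_mset (u ! Suc k) (mset (take k u)) else mset (take (Suc k) u))"
  using k
proof (induction k)
  case 0
  then show ?case
    using swap_perm_Suc_less[OF P] by (auto simp: mset_take_Suc nth_apply_swaps swap_source_def)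
next
  case (Suc k)
  then have IH: "mset (take (Suc k) (apply_swaps P u)) =
    (if k \<in> P then add_mset (u ! Suc k) (mset (take k u)) else mset (take (Suc k) u))"
    by simp
  have "apply_swaps P u ! Suc k =
      (if Suc k \<in> P then u ! Suc (Suc k) else if k \<in> P then u ! k else u ! Suc k)"
    using Suc.prems by (simp add: nth_apply_swaps swap_source_def)
  then show ?case
    using Suc.prems IH swap_perm_notin_Suc[OF P, of k] swap_perm_Suc_less[OF P, of "Suc k"]
    by (auto simp: mset_take_Suc[of "Suc k"] mset_take_Suc[of k u])
qed

lemma mset_take_Suc_apply_swaps_subset:
  assumes "swap_perm (length u) P" "k < length u"
  shows "mset (take (Suc k) (apply_swaps P u)) \<subseteq># add_mset (u ! Suc k) (mset (take (Suc k) u))"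
  using mset_take_Suc_apply_swaps[OF assms] by (auto simp: take_Suc_conv_app_nth assms(2))

lemma common_match_fixes_window:
  assumes P: "swap_perm (length s) P" "q \<in> P" and Q: "swap_perm (length s) Q" "Suc q \<in> Q"
    and ab: "s ! q \<noteq> s ! Suc q" and bc: "s ! Suc q \<noteq> s ! Suc (Suc q)"
    and "matching (apply_swaps P s) t" "matching (apply_swaps Q s) t"
  shows "\<forall>i\<in>{q..q+2}. t ! i = s ! i"
proof -
  define x y where "x = apply_swaps P s" and "y = apply_swaps Q s"
  obtain C where C: "swap_perm (length x) C" "apply_swaps C x = t"
    using \<open>matching (apply_swaps P s) t\<close> unfolding matching_def x_def by blast
  obtain D where D: "swap_perm (length y) D" "apply_swaps D y = t"
    using \<open>matching (apply_swaps Q s) t\<close> unfolding matching_def y_def by blast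
  have n: "Suc (Suc q) < length s" "length x = length s" "length y = length s"
    using swap_perm_Suc_less[OF Q] by (simp_all add: x_def y_def)
  have x_take1: "mset (take (Suc q) x) = add_mset (s ! Suc q) (mset (take q s))"
    using mset_take_Suc_apply_swaps[OF P(1), of q] P(2) n by (simp add: x_def)
  have y_take1: "mset (take (Suc q) y) = add_mset (s ! q) (mset (take q s))"
    using mset_take_Suc_apply_swaps[OF Q(1), of q] swap_perm_notin_Suc[OF Q] n
    by (simp add: y_def mset_take_Suc)
  have x_take2: "mset (take (Suc (Suc q)) x) = add_mset (s ! Suc q) (mset (take (Suc q) s))"
    using mset_take_Suc_apply_swaps[OF P(1), of "Suc q"] swap_perm_Suc_notin[OF P] n
    by (simp add: x_def mset_take_Suc)
  have y_take2: "mset (take (Suc (Suc q)) y) = add_mset (s ! Suc (Suc q)) (mset (take (Suc q) s))"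
    using mset_take_Suc_apply_swaps[OF Q(1), of "Suc q"] Q(2) n by (simp add: y_def)
  have y_Suc: "y ! Suc q = s ! Suc (Suc q)"
    using nth_apply_swaps_swapped[OF Q] by (simp add: y_def)
  \<comment> \<open>Otherwise the first q + 1 letters of t are those of x and contain s ! Suc q once more
    than the first q letters of s; but they lie within the first q + 1 letters of y plus y ! Suc q,
    which do not.\<close>
  have qC: "q \<in> C"
  proof (rule ccontr)
    assume "q \<notin> C"
    then have "mset (take (Suc q) t) = add_mset (s ! Suc q) (mset (take q s))"
      using mset_take_Suc_apply_swaps[OF C(1), of q] n C(2) x_take1 by simp
    moreover have
      "mset (take (Suc q) t) \<subseteq># add_mset (s ! Suc (Suc q)) (add_mset (s ! q) (mset (take q s)))"
      using mset_take_Suc_apply_swaps_subset[OF D(1), of q] n D(2) y_take1 y_Suc by simp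
    ultimately show False
      using mset_subset_eq_count[of _ _ "s ! Suc q"] ab bc by fastforce
  qed
  have Suc_q_D: "Suc q \<in> D"
  proof (rule ccontr)
    assume "Suc q \<notin> D"
    then have "mset (take (Suc (Suc q)) t) = mset (take (Suc (Suc q)) y)"
      using mset_take_Suc_apply_swaps[OF D(1), of "Suc q"] n D(2) by simp
    moreover have "mset (take (Suc (Suc q)) t) = mset (take (Suc (Suc q)) x)"
      using mset_take_Suc_apply_swaps[OF C(1), of "Suc q"] swap_perm_Suc_notin[OF C(1) qC] n C(2)
      by simp
    ultimately show False
      using x_take2 y_take2 bc by simp
  qed
  have "t ! q = s ! q" "t ! Suc q = s ! Suc q"
    using nth_apply_swaps_swapped[OF C(1) qC] nth_apply_swaps_swapped[OF P] C(2)
    by (simp_all add: x_def)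
  moreover have "t ! Suc (Suc q) = s ! Suc (Suc q)"
    using nth_apply_swaps_swapped[OF D(1) Suc_q_D] D(2) y_Suc by simp
  moreover have "{q..q+2} = {q, Suc q, Suc (Suc q)}"
    by auto
  ultimately show ?thesis
    by simp
qed

lemma sym_diff_adjacent_fixes_window:
  assumes vu: "matching v u" and vw: "matching v w"
    and q: "q \<in> sym_diff (valid_perm v u) (valid_perm v w)"
    and Suc_q: "Suc q \<in> sym_diff (valid_perm v u) (valid_perm v w)"
    and ut: "matching u t" and wt: "matching w t"
  shows "\<forall>i\<in>{q..q+2}. t ! i = v ! i"
proof -
  have window: "\<forall>i\<in>{q..q+2}. t ! i = v ! i"
    if vu': "matching v u'" and vw': "matching v w'"
      and q_u': "q \<in> valid_perm v u'" and Suc_q_w': "Suc q \<in> valid_perm v w'"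
      and "matching u' t" "matching w' t" for u' w'
  proof -
    note A = valid_perm_spec[OF vu'] and B = valid_perm_spec[OF vw']
    have "v ! q \<noteq> v ! Suc q" "v ! Suc q \<noteq> v ! Suc (Suc q)"
      using A(2) B(2) q_u' Suc_q_w' by (auto simp: valid_swaps_def)
    from common_match_fixes_window[OF A(1) q_u' B(1) Suc_q_w' this] show ?thesis
      using A(3) B(3) \<open>matching u' t\<close> \<open>matching w' t\<close> by simp
  qed
  show ?thesis
  proof (cases "q \<in> valid_perm v u")
    case True
    with Suc_q swap_perm_Suc_notin[OF valid_perm_spec(1)[OF vu]] have "Suc q \<in> valid_perm v w"
      by blast
    from window[OF vu vw True this ut wt] show ?thesis .
  next
    case False
    with q Suc_q swap_perm_Suc_notin[OF valid_perm_spec(1)[OF vw]]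
    have "q \<in> valid_perm v w" "Suc q \<in> valid_perm v u"
      by blast+
    from window[OF vw vu this wt ut] show ?thesis .
  qed
qed

lemma sym_diff_adjacent_not_matching:
  assumes vu: "matching v u" and vw: "matching v w"
    and q: "q \<in> sym_diff (valid_perm v u) (valid_perm v w)"
    and Suc_q: "Suc q \<in> sym_diff (valid_perm v u) (valid_perm v w)"
  shows "\<not> matching u w"
proof
  assume "matching u w"
  then have "\<forall>i\<in>{q..q+2}. u ! i = v ! i"
    using sym_diff_adjacent_fixes_window[OF vu vw q Suc_q] matching_refl matching_sym by blast
  then have "u ! q = v ! q" "u ! Suc q = v ! Suc q"
    by simp_all
  moreover have "q \<in> valid_perm v u \<or> Suc q \<in> valid_perm v u"
    using q Suc_q swap_perm_Suc_notin[OF valid_perm_spec(1)[OF vw]] by blast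
  moreover note A = valid_perm_spec[OF vu]
  ultimately show False
    using nth_apply_valid_swaps_neq[OF A(1,2)] A(3) by auto
qed

lemma xor_swap_string:
  assumes "length v = length u" "length w = length u"
  shows "xor_list (swap_string u v) (swap_string v w) =
    map (\<lambda>p. p \<in> sym_diff (valid_perm u v) (valid_perm v w)) [0..<length u - 1]"
  using assms by (intro nth_equalityI) (auto simp: xor_list_def swap_string_def)

theorem mainTheorem2:
  fixes s1 s2 s3 :: "'a list" and n :: nat
  assumes "length s1 = n" and "length s2 = n" and "length s3 = n"
    and "matching s1 s2" and "matching s2 s3"
  defines "h \<equiv> xor_list (swap_string s1 s2) (swap_string s2 s3)"
  shows "((\<forall>q. q + 1 < length h \<longrightarrow> \<not> (h ! q \<and> h ! (q+1)))
            \<longrightarrow> matching s1 s3 \<and> h = swap_string s1 s3)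
       \<and> (\<forall>q. q + 1 < length h \<and> h ! q \<and> h ! (q+1) \<longrightarrow>
            \<not> matching s1 s3 \<and>
            (\<forall>t :: 'a list. length t = n \<and> matching t s1 \<and> matching t s3 \<longrightarrow>
               (\<forall>i\<in>{q..q+2}. t ! i = s2 ! i)))"
proof -
  have s21: "matching s2 s1"
    using assms(4) by (rule matching_sym)
  define H where "H = sym_diff (valid_perm s2 s1) (valid_perm s2 s3)"
  have h: "h = map (\<lambda>p. p \<in> H) [0..<n - 1]"
    using xor_swap_string[of s2 s1 s3] assms(1-3)
    by (simp add: h_def H_def valid_perm_sym[OF assms(4)])
  have H_less: "Suc p < n" if "p \<in> H" for p
    using that valid_perm_spec(1)[OF s21] valid_perm_spec(1)[OF assms(5)] assms(2)
    by (auto simp: H_def dest: swap_perm_Suc_less)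
  have "matching s1 s3 \<and> h = swap_string s1 s3"
    if no_adj: "\<forall>q. q + 1 < length h \<longrightarrow> \<not> (h ! q \<and> h ! (q+1))"
  proof -
    have "Suc p \<notin> H" if "p \<in> H" for p
      using no_adj[rule_format, of p] that H_less[of "Suc p"] by (simp add: h) linarith
    from matching_trans_sym_diff[OF s21 assms(5) this[unfolded H_def]] show ?thesis
      using assms(1) by (simp add: h H_def swap_string_def)
  qed
  moreover have "\<not> matching s1 s3 \<and>
      (\<forall>t. length t = n \<and> matching t s1 \<and> matching t s3 \<longrightarrow>
        (\<forall>i\<in>{q..q+2}. t ! i = s2 ! i))"
    if "q + 1 < length h" "h ! q" "h ! (q+1)" for q
  proof -
    have "q \<in> H" "Suc q \<in> H"
      using that by (auto simp: h)
    note adjacent = this[unfolded H_def]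
    show ?thesis
      using sym_diff_adjacent_not_matching[OF s21 assms(5) adjacent]
        sym_diff_adjacent_fixes_window[OF s21 assms(5) adjacent] matching_sym by blast
  qed
  ultimately show ?thesis
    by blast
qed

end
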